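(* Let $r \le \min(M,N)$ be positive integers and let $\mathcal{P}=\mathcal{B}_\infty=\{\mathbf{x}\in\mathbb{R}^r \mid \|\mathbf{x}\|_\infty\le 1\}$. Let $\mathbf{H}_g\in\mathbb{R}^{M\times r}$ have full column rank, let $\mathbf{S}_g\in\mathbb{R}^{r\times N}$ have all of its columns in $\mathcal{P}$, and set $\mathbf{Y}=\mathbf{H}_g\mathbf{S}_g$. Suppose $\mathbf{S}_g$ is a sufficiently scattered factor corresponding to $\mathcal{P}$ (as defined in the context). Consider the Det-Max optimization problem $$\max_{\mathbf{H}\in\mathbb{R}^{M\times r},\ \mathbf{S}\in\mathbb{R}^{r\times N}} \det(\mathbf{S}\mathbf{S}^T)\quad\text{subject to}\quad \mathbf{Y}=\mathbf{H}\mathbf{S},\ \ \mathbf{S}_{:,j}\in\mathcal{P}\ \ (j=1,\dots,N).$$ Then every global optimum $(\mathbf{H}_*,\mathbf{S}_* )$ of this problem satisfies $$\mathbf{H}_*=\mathbf{H}_g\boldsymbol{\Pi}^T\mathbf{D},\qquad \mathbf{S}_*=\mathbf{D}\boldsymbol{\Pi}\mathbf{S}_g,$$ for some permutation matrix $\boldsymbol{\Pi}\in\mathbb{R}^{r\times r}$ and some invertible diagonal matrix $\mathbf{D}\in\mathbb{R}^{r\times r}$ with diagonal entries in $\{-1,+1\}$.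
   Context: $\mathbf{S}_{:,j}$ denotes the $j$-th column of $\mathbf{S}$; $\mathrm{conv}(\mathbf{S})$ is the convex hull of the columns of $\mathbf{S}$. For a convex polytope $\mathcal{P}\subset\mathbb{R}^r$ with nonempty interior, $\mathcal{E}_\mathcal{P}$ denotes its maximum volume inscribed ellipsoid (MVIE), i.e. the (unique) ellipsoid of maximal volume contained in $\mathcal{P}$, written $\mathcal{E}_\mathcal{P}=\{\mathbf{C}_\mathcal{P}\mathbf{u}+\mathbf{g}_\mathcal{P}\mid \|\mathbf{u}\|_2\le 1\}$ with $\mathbf{C}_\mathcal{P}\succeq 0$ and center $\mathbf{g}_\mathcal{P}$. For a set $C\subset\mathbb{R}^r$ and point $\mathbf{d}$, the polar of $C$ with respect to $\mathbf{d}$ is $C^{*,\mathbf{d}}=\{\mathbf{x}\in\mathbb{R}^r\mid \langle\mathbf{x},\mathbf{y}-\mathbf{d}\rangle\le 1\ \forall \mathbf{y}\in C\}$. $\mathrm{bd}(\cdot)$ denotes boundary and $\mathrm{ext}(\cdot)$ the set of extreme points (vertices). A matrix $\mathbf{S}\in\mathbb{R}^{r\times N}$ is called a sufficiently scattered factor corresponding to $\mathcal{P}$ if (i) $\mathcal{P}\supseteq\mathrm{conv}(\mathbf{S})\supset\mathcal{E}_\mathcal{P}$, and (ii) $\mathrm{conv}(\mathbf{S})^{*,\mathbf{g}_\mathcal{P}}\cap\mathrm{bd}(\mathcal{E}_\mathcal{P}^{*,\mathbf{g}_\mathcal{P}})=\mathrm{ext}(\mathcal{P}^{*,\mathbf{g}_\mathcal{P}})$.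 *)

theory Defs
  imports "HOL-Analysis.Analysis"
begin

definition Binf :: "(real^'r) set" where
  "Binf = {x. infnorm x \<le> 1}"

definition psd :: "real^'r^'r \<Rightarrow> bool" where
  "psd C \<longleftrightarrow> transpose C = C \<and> (\<forall>x. 0 \<le> x \<bullet> (C *v x))"

definition ellipsoid :: "real^'r^'r \<Rightarrow> real^'r \<Rightarrow> (real^'r) set" where
  "ellipsoid C g = {C *v u + g | u. norm u \<le> 1}"

definition is_MVIE :: "(real^'r) set \<Rightarrow> real^'r^'r \<Rightarrow> real^'r \<Rightarrow> bool" where
  "is_MVIE P C g \<longleftrightarrow> psd C \<and> ellipsoid C g \<subseteq> P \<and>
     (\<forall>C' g'. psd C' \<and> ellipsoid C' g' \<subseteq> P \<longrightarrow>
        measure lebesgue (ellipsoid C' g') \<le> measure lebesgue (ellipsoid C g))"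

definition polar_wrt :: "(real^'r) set \<Rightarrow> real^'r \<Rightarrow> (real^'r) set" where
  "polar_wrt C d = {x. \<forall>y\<in>C. x \<bullet> (y - d) \<le> 1}"

definition ext_pts :: "(real^'r) set \<Rightarrow> (real^'r) set" where
  "ext_pts P = {x. x extreme_point_of P}"

definition suff_scattered :: "real^'n^'r \<Rightarrow> (real^'r) set \<Rightarrow> bool" where
  "suff_scattered S P \<longleftrightarrow> (\<exists>C g. is_MVIE P C g \<and>
      ellipsoid C g \<subseteq> convex hull (columns S) \<and> convex hull (columns S) \<subseteq> P \<and>
      polar_wrt (convex hull (columns S)) g \<inter> frontier (polar_wrt (ellipsoid C g) g)
        = ext_pts (polar_wrt P g))"

definition permutation_matrix :: "real^'r^'r \<Rightarrow> bool" where
  "permutation_matrix A \<longleftrightarrow>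
     (\<exists>p. p permutes (UNIV::'r set) \<and> A = (\<chi> i j. if p i = j then 1 else 0))"

definition signed_diag :: "real^'r^'r \<Rightarrow> bool" where
  "signed_diag D \<longleftrightarrow>
     (\<exists>d. (\<forall>i. d i \<in> {-1, 1}) \<and> D = (\<chi> i j. if i = j then d i else 0))"

definition detmax_feasible :: "real^'n^'m \<Rightarrow> real^'r^'m \<Rightarrow> real^'n^'r \<Rightarrow> (real^'r) set \<Rightarrow> bool" where
  "detmax_feasible Y H S P \<longleftrightarrow> Y = H ** S \<and> (\<forall>j. column j S \<in> P)"

definition detmax_optimal :: "real^'n^'m \<Rightarrow> real^'r^'m \<Rightarrow> real^'n^'r \<Rightarrow> (real^'r) set \<Rightarrow> bool" where
  "detmax_optimal Y H S P \<longleftrightarrow> detmax_feasible Y H S P \<and>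
     (\<forall>H' S'. detmax_feasible Y H' S' P \<longrightarrow>
        det (S' ** transpose S') \<le> det (S ** transpose S))"

end

theory Submission
  imports Defs
begin

(* The maximum volume ellipsoid of the cube B_inf is the unit ball: if C B + g lies in the cube,
   the rows of C have length at most 1 - |g_i|, so by Hadamard's inequality its volume
   |det C| vol(B) is at most vol(B), with equality only if C is orthogonal and g = 0.
   Hence the unit ball lies in conv(S_g), S_g has a right inverse R, and an optimum satisfies
   S_* = W S_g and H_* W = H_g with W = S_* R. Optimality gives |det W| >= 1, while W maps
   conv(S_g), which contains the unit ball, into the cube, so the rows of W have length at
   most 1 and Hadamard's inequality makes W orthogonal. Each row of W is then a unit vector in
   the polar of conv(S_g), i.e. on the boundary of the polar of the MVIE, so sufficient
   scatteredness makes it a vertex +-e_j of the cross-polytope (the polar of the cube);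
   orthogonality makes the j distinct, so W = D Pi. *)

section \<open>Volume of linear images\<close>

lemma measure_swap_coordinates_cbox:
  "measure lebesgue ((\<lambda>x::real^'n. \<chi> i. x $ Transposition.transpose m n i) ` cbox a b)
     = measure lebesgue (cbox a b)"
proof (cases "cbox a b = {}")
  case False
  let ?h = "\<lambda>x::real^'n. \<chi> i. x $ Transposition.transpose m n i"
  have box: "?h ` cbox a b = cbox (?h a) (?h b)"
    by (auto simp: image_iff lambda_swap_Galois mem_box_cart) (metis transpose_involutory)+
  then have "cbox (?h a) (?h b) \<noteq> {}"
    using False by blast
  moreover have "(\<Prod>i\<in>UNIV. b $ Transposition.transpose m n i - a $ Transposition.transpose m n i)
      = (\<Prod>i\<in>UNIV. b $ i - a $ i)"
    using prod.permute[OF permutes_swap_id, where S=UNIV and g="\<lambda>i. b $ i - a $ i"] by (simp add: o_def)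
  ultimately show ?thesis
    using False by (simp add: box content_cbox_cart)
qed simp

lemma measure_shear_cbox:
  fixes a :: "real^'n"
  assumes "m \<noteq> n"
  shows "measure lebesgue ((\<lambda>x. \<chi> i. if i = m then x $ m + x $ n else x $ i) ` cbox a b)
           = measure lebesgue (cbox a b)"
proof (cases "cbox a b = {}")
  case False
  let ?h = "\<lambda>x::real^'n. \<chi> i. if i = m then x $ m + x $ n else x $ i"
  define t where "t = axis n (a $ n)"
  have lin: "linear ?h"
    by (rule linearI) (auto simp: algebra_simps vec_eq_iff)
  have shift: "cbox a b = (+) t ` cbox (a - t) (b - t)"
    using cbox_translation[of t "a - t" "b - t"] by simp
  then have "?h ` cbox a b = (+) (?h t) ` ?h ` cbox (a - t) (b - t)"
    by (simp add: image_image linear_add[OF lin])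
  then have "measure lebesgue (?h ` cbox a b) = measure lebesgue (?h ` cbox (a - t) (b - t))"
    by (simp add: measure_translation)
  also have "\<dots> = measure lebesgue (cbox (a - t) (b - t))"
    using False shift \<open>m \<noteq> n\<close> by (intro measure_shear_interval) (auto simp: t_def)
  also have "\<dots> = measure lebesgue (cbox a b)"
    by (simp only: shift measure_translation)
  finally show ?thesis .
qed simp

lemma abs_det_matrix_swap_coordinates:
  "\<bar>det (matrix (\<lambda>x::real^'n. \<chi> i. x $ Transposition.transpose m n i))\<bar> = 1"
proof -
  have "matrix (\<lambda>x::real^'n. \<chi> i. x $ Transposition.transpose m n i)
          = (\<chi> i j. mat 1 $ i $ Transposition.transpose m n j)"
    by (auto simp: matrix_def axis_def mat_def vec_eq_iff Transposition.transpose_def)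
  then show ?thesis
    by (simp add: det_permute_columns permutes_swap_id sign_swap_id abs_mult)
qed

lemma det_matrix_shear:
  assumes "m \<noteq> n"
  shows "det (matrix (\<lambda>x::real^'n. \<chi> i. if i = m then x $ m + x $ n else x $ i)) = 1"
proof -
  have "matrix (\<lambda>x::real^'n. \<chi> i. if i = m then x $ m + x $ n else x $ i)
          = (\<chi> k. if k = m then row m (mat 1) + 1 *s row n (mat 1) else row k (mat 1))"
    by (auto simp: matrix_def vec_eq_iff axis_def row_def mat_def)
  then show ?thesis
    using det_row_operation[OF assms, where c=1 and A="mat 1 :: real^'n^'n"] by simp
qed

definition scales_measure_by_det :: "(real^'n \<Rightarrow> real^'n) \<Rightarrow> bool" where
  "scales_measure_by_det f \<longleftrightarrow> (\<forall>S \<in> lmeasurable.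
     f ` S \<in> lmeasurable \<and> measure lebesgue (f ` S) = \<bar>det (matrix f)\<bar> * measure lebesgue S)"

lemma scales_measure_by_det_comp:
  fixes f g :: "real^'n \<Rightarrow> real^'n"
  assumes "linear f" "linear g" "scales_measure_by_det f" "scales_measure_by_det g"
  shows "scales_measure_by_det (f \<circ> g)"
  unfolding scales_measure_by_det_def
proof
  fix S :: "(real^'n) set"
  assume "S \<in> lmeasurable"
  then have g: "g ` S \<in> lmeasurable" "measure lebesgue (g ` S) = \<bar>det (matrix g)\<bar> * measure lebesgue S"
    using assms(4) by (simp_all add: scales_measure_by_det_def)
  then have "f ` g ` S \<in> lmeasurable"
    "measure lebesgue (f ` g ` S) = \<bar>det (matrix f)\<bar> * measure lebesgue (g ` S)"
    using assms(3) by (simp_all add: scales_measure_by_det_def)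
  with g show "(f \<circ> g) ` S \<in> lmeasurable \<and>
      measure lebesgue ((f \<circ> g) ` S) = \<bar>det (matrix (f \<circ> g))\<bar> * measure lebesgue S"
    by (auto simp: matrix_compose[OF assms(2,1)] det_mul abs_mult image_comp)
qed

lemma scales_measure_by_det_singular:
  assumes "linear f" and "\<And>x. f x $ i = 0"
  shows "scales_measure_by_det f"
proof -
  have "\<not> surj f"
    using assms(2) by (metis one_neq_zero surjE vec_component)
  then have "\<not> inj f"
    using assms(1) linear_injective_imp_surjective by blast
  then have "negligible (f ` S)" for S
    using assms(1) negligible_linear_singular_image by blast
  moreover have "det (matrix f) = 0"
    using \<open>\<not> inj f\<close> det_nz_iff_inj[OF assms(1)] by blast
  ultimately show ?thesis
    by (simp add: scales_measure_by_det_def negligible_imp_measurable negligible_imp_measure0)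
qed

lemma scales_measure_by_det_stretch: "scales_measure_by_det (\<lambda>x. \<chi> i. c i * x $ i)"
  by (simp add: scales_measure_by_det_def measurable_stretch measure_stretch axis_def matrix_def
      det_diagonal)

lemma scales_measure_by_det_if_cbox:
  assumes "linear f"
    and "\<And>a b. measure lebesgue (f ` cbox a b) = \<bar>det (matrix f)\<bar> * measure lebesgue (cbox a b)"
  shows "scales_measure_by_det f"
  using measure_linear_sufficient[OF assms(1) _ assms(2)] by (simp add: scales_measure_by_det_def)

text \<open>The library's \<open>measure_linear_image\<close> assumes a wellorder index type, which its proof
  by reduction to elementary maps does not need.\<close>

proposition measure_linear_image_cart:
  fixes f :: "real^'n \<Rightarrow> real^'n"
  assumes "linear f" "S \<in> lmeasurable"
  shows "f ` S \<in> lmeasurable \<and> measure lebesgue (f ` S) = \<bar>det (matrix f)\<bar> * measure lebesgue S"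
proof -
  have "scales_measure_by_det f"
  proof (rule induct_linear_elementary[OF \<open>linear f\<close>])
    fix f g :: "real^'n \<Rightarrow> real^'n"
    assume "linear f" "linear g" "scales_measure_by_det f" "scales_measure_by_det g"
    then show "scales_measure_by_det (f \<circ> g)"
      by (rule scales_measure_by_det_comp)
  next
    fix m n :: 'n
    show "scales_measure_by_det (\<lambda>x. \<chi> i. x $ Transposition.transpose m n i)"
      by (intro scales_measure_by_det_if_cbox linearI)
        (simp_all add: vec_eq_iff measure_swap_coordinates_cbox abs_det_matrix_swap_coordinates)
  next
    fix m n :: 'n
    assume "m \<noteq> n"
    then show "scales_measure_by_det (\<lambda>x. \<chi> i. if i = m then x $ m + x $ n else x $ i)"
      by (intro scales_measure_by_det_if_cbox linearI)
        (auto simp: algebra_simps vec_eq_iff measure_shear_cbox det_matrix_shear)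
  qed (auto intro: scales_measure_by_det_singular scales_measure_by_det_stretch)
  with assms show ?thesis
    by (simp add: scales_measure_by_det_def)
qed


section \<open>Hadamard's inequality\<close>

lemma matrix_mul_transpose_eq_inner_rows:
  fixes A :: "real^'n^'m"
  shows "A ** transpose A = (\<chi> i j. A $ i \<bullet> A $ j)"
  by (simp add: matrix_matrix_mult_def transpose_def inner_vec_def vec_eq_iff mult.commute)

lemma row_matrix_matrix_mult:
  fixes E :: "real^'m^'k" and A :: "real^'n^'m"
  shows "(E ** A) $ i = transpose A *v E $ i"
  by (simp add: vec_eq_iff matrix_matrix_mult_def matrix_vector_mult_def transpose_def mult.commute)

text \<open>A zero vector \<open>b l\<close> gets the junk coefficient \<open>x \<bullet> 0 / 0 = 0\<close>, so no nonzeroness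
  assumption is needed.\<close>

lemma orthogonal_family_residual:
  fixes b :: "'i \<Rightarrow> 'a::real_inner" and x :: 'a
  assumes "finite K" and orth: "\<And>i j. i \<in> K \<Longrightarrow> j \<in> K \<Longrightarrow> i \<noteq> j \<Longrightarrow> b i \<bullet> b j = 0"
  defines "p \<equiv> \<Sum>l\<in>K. (x \<bullet> b l / (b l \<bullet> b l)) *\<^sub>R b l"
  shows orthogonal_family_residual_perp: "j \<in> K \<Longrightarrow> (x - p) \<bullet> b j = 0"
    and orthogonal_family_residual_shorter: "norm (x - p) \<le> norm x"
proof -
  have perp: "(x - p) \<bullet> b j = 0" if "j \<in> K" for j
  proof -
    have "p \<bullet> b j = (\<Sum>l\<in>K. if l = j then (x \<bullet> b j / (b j \<bullet> b j)) * (b j \<bullet> b j) else 0)"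
      unfolding p_def inner_sum_left using orth that by (intro sum.cong) auto
    also have "\<dots> = x \<bullet> b j"
      using \<open>finite K\<close> that by (cases "b j = 0") simp_all
    finally show ?thesis
      by (simp add: inner_diff_left)
  qed
  then show "j \<in> K \<Longrightarrow> (x - p) \<bullet> b j = 0" .
  have "(x - p) \<bullet> p = 0"
    unfolding p_def inner_sum_right by (simp add: perp[unfolded p_def])
  then have "(norm x)\<^sup>2 = (norm (x - p))\<^sup>2 + (norm p)\<^sup>2"
    using norm_add_Pythagorean[of "x - p" p] by (simp add: orthogonal_def)
  then have "(norm (x - p))\<^sup>2 \<le> (norm x)\<^sup>2"
    using zero_le_power2[of "norm p"] by linarith
  then show "norm (x - p) \<le> norm x"
    using power2_le_imp_le norm_ge_zero by blast
qed

lemma gram_schmidt_rows_step: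
  fixes A :: "real^'n^'m" and E :: "real^'m^'m"
  assumes "finite K" "k \<notin> K"
    and orth: "\<And>i j. i \<in> K \<Longrightarrow> j \<in> K \<Longrightarrow> i \<noteq> j \<Longrightarrow> (E ** A) $ i \<bullet> (E ** A) $ j = 0"
  obtains E' where "det E' = det E"
    and "\<And>i j. i \<in> insert k K \<Longrightarrow> j \<in> insert k K \<Longrightarrow> i \<noteq> j \<Longrightarrow> (E' ** A) $ i \<bullet> (E' ** A) $ j = 0"
    and "\<And>i. norm ((E' ** A) $ i) \<le> norm ((E ** A) $ i)"
proof -
  define B where "B = E ** A"
  define c where "c j = (B $ k \<bullet> B $ j) / (B $ j \<bullet> B $ j)" for j
  define p where "p = (\<Sum>j\<in>K. c j *\<^sub>R B $ j)"
  define E' where "E' = (\<chi> i. if i = k then row k E + - (\<Sum>j\<in>K. c j *\<^sub>R E $ j) else row i E)"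
  have "- (\<Sum>j\<in>K. c j *\<^sub>R E $ j) \<in> vec.span {row j E |j. j \<noteq> k}"
    using \<open>k \<notin> K\<close> unfolding span_vec_eq
    by (intro span_neg span_sum span_mul) (auto intro: span_base simp: row_def vec_lambda_eta)
  then have "det E' = det E"
    unfolding E'_def by (rule det_row_span)
  have "E' $ i = (if i = k then E $ k - (\<Sum>j\<in>K. c j *\<^sub>R E $ j) else E $ i)" for i
    by (simp add: E'_def row_def vec_lambda_eta)
  then have E'_rows: "(E' ** A) $ i = (if i = k then B $ k - p else B $ i)" for i
    using matrix_vector_mul_linear[of "transpose A"]
    by (simp add: row_matrix_matrix_mult B_def p_def linear_diff linear_sum linear_scale o_def
        del: transpose_matrix_vector)
  have orthB: "B $ i \<bullet> B $ j = 0" if "i \<in> K" "j \<in> K" "i \<noteq> j" for i j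
    using orth that by (simp add: B_def)
  have perp: "(B $ k - p) \<bullet> B $ j = 0" if "j \<in> K" for j
    using orthogonal_family_residual_perp[of K "\<lambda>j. B $ j", OF \<open>finite K\<close> orthB that]
    by (simp add: p_def c_def)
  have shorter: "norm (B $ k - p) \<le> norm (B $ k)"
    using orthogonal_family_residual_shorter[of K "\<lambda>j. B $ j", OF \<open>finite K\<close> orthB]
    by (simp add: p_def c_def)
  show ?thesis
  proof (rule that[OF \<open>det E' = det E\<close>])
    fix i j
    assume "i \<in> insert k K" "j \<in> insert k K" "i \<noteq> j"
    then consider "i = k" "j \<in> K" | "j = k" "i \<in> K" | "i \<in> K" "j \<in> K"
      by blast
    then show "(E' ** A) $ i \<bullet> (E' ** A) $ j = 0"
      using orthB[of i j] perp[of i] perp[of j] \<open>k \<notin> K\<close> \<open>i \<noteq> j\<close>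
      by cases (auto simp: E'_rows inner_commute)
  next
    fix i
    show "norm ((E' ** A) $ i) \<le> norm ((E ** A) $ i)"
      using shorter by (simp add: E'_rows B_def)
  qed
qed

lemma gram_schmidt_rows:
  fixes A :: "real^'n^'m"
  obtains E :: "real^'m^'m" where "det E = 1"
    and "\<And>i j. i \<noteq> j \<Longrightarrow> (E ** A) $ i \<bullet> (E ** A) $ j = 0"
    and "\<And>i. norm ((E ** A) $ i) \<le> norm (A $ i)"
proof -
  have "\<exists>E::real^'m^'m. det E = 1 \<and> (\<forall>i\<in>K. \<forall>j\<in>K. i \<noteq> j \<longrightarrow> (E ** A) $ i \<bullet> (E ** A) $ j = 0)
          \<and> (\<forall>i. norm ((E ** A) $ i) \<le> norm (A $ i))" if "finite K" for K
    using that
  proof (induction K rule: finite_induct)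
    case empty
    show ?case
      by (intro exI[of _ "mat 1"]) simp
  next
    case (insert k K)
    then obtain E :: "real^'m^'m" where "det E = 1"
      and "\<forall>i\<in>K. \<forall>j\<in>K. i \<noteq> j \<longrightarrow> (E ** A) $ i \<bullet> (E ** A) $ j = 0"
      and short: "\<forall>i. norm ((E ** A) $ i) \<le> norm (A $ i)"
      by blast
    then obtain E' where "det E' = 1"
      and "\<And>i j. i \<in> insert k K \<Longrightarrow> j \<in> insert k K \<Longrightarrow> i \<noteq> j \<Longrightarrow> (E' ** A) $ i \<bullet> (E' ** A) $ j = 0"
      and "\<And>i. norm ((E' ** A) $ i) \<le> norm ((E ** A) $ i)"
      using gram_schmidt_rows_step[OF insert.hyps, of E A] by metis
    with short show ?case
      by (meson order_trans)
  qed
  from this[of UNIV] that show ?thesis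
    by auto
qed

lemma det_gram_orthogonal_rows:
  fixes B :: "real^'n^'m"
  assumes "\<And>i j. i \<noteq> j \<Longrightarrow> B $ i \<bullet> B $ j = 0"
  shows "det (B ** transpose B) = (\<Prod>i\<in>UNIV. (norm (B $ i))\<^sup>2)"
  unfolding matrix_mul_transpose_eq_inner_rows
  by (subst det_diagonal) (use assms in \<open>auto simp: dot_square_norm\<close>)

lemma det_gram_row_transform:
  fixes A :: "real^'n^'m" and E :: "real^'m^'m"
  assumes "det E = 1"
  shows "det ((E ** A) ** transpose (E ** A)) = det (A ** transpose A)"
proof -
  have "(E ** A) ** transpose (E ** A) = E ** (A ** transpose A) ** transpose E"
    by (simp add: matrix_transpose_mul matrix_mul_assoc)
  then show ?thesis
    using assms by (simp add: det_mul)
qed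

lemma det_gram_le_prod_norm_rows:
  fixes A :: "real^'n^'m"
  shows "det (A ** transpose A) \<le> (\<Prod>i\<in>UNIV. (norm (A $ i))\<^sup>2)"
proof -
  obtain E :: "real^'m^'m" where "det E = 1"
    and orth: "\<And>i j. i \<noteq> j \<Longrightarrow> (E ** A) $ i \<bullet> (E ** A) $ j = 0"
    and short: "\<And>i. norm ((E ** A) $ i) \<le> norm (A $ i)"
    using gram_schmidt_rows[of A] by metis
  have "det (A ** transpose A) = (\<Prod>i\<in>UNIV. (norm ((E ** A) $ i))\<^sup>2)"
    using det_gram_row_transform[OF \<open>det E = 1\<close>, of A] det_gram_orthogonal_rows[OF orth] by linarith
  also have "\<dots> \<le> (\<Prod>i\<in>UNIV. (norm (A $ i))\<^sup>2)"
    by (intro prod_mono conjI power_mono short) simp_all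
  finally show ?thesis .
qed

lemma abs_det_le_prod_norm_rows:
  fixes A :: "real^'n^'n"
  shows "\<bar>det A\<bar> \<le> (\<Prod>i\<in>UNIV. norm (A $ i))"
proof -
  have "(det A)\<^sup>2 = det (A ** transpose A)"
    by (simp add: det_mul power2_eq_square)
  also have "\<dots> \<le> (\<Prod>i\<in>UNIV. norm (A $ i))\<^sup>2"
    using det_gram_le_prod_norm_rows[of A] by (simp add: prod_power_distrib)
  finally show ?thesis
    using abs_le_square_iff[of "det A" "\<Prod>i\<in>UNIV. norm (A $ i)"] by (simp add: prod_nonneg)
qed

lemma det_gram_pos_if_right_invertible:
  fixes A :: "real^'n^'m"
  assumes "A ** R = mat 1"
  shows "0 < det (A ** transpose A)"
proof -
  obtain E :: "real^'m^'m" where "det E = 1"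
    and orth: "\<And>i j. i \<noteq> j \<Longrightarrow> (E ** A) $ i \<bullet> (E ** A) $ j = 0"
    using gram_schmidt_rows[of A] by metis
  have "(E ** A) $ i \<noteq> 0" for i
  proof
    assume "(E ** A) $ i = 0"
    then have "(E ** A ** R) $ i = 0"
      by (simp add: row_matrix_matrix_mult[of "E ** A" R] del: transpose_matrix_vector)
    then have "row i (E ** A ** R) = 0"
      by (simp add: row_def vec_eq_iff)
    moreover have "E ** A ** R = E"
      using assms by (simp add: matrix_mul_assoc[symmetric])
    ultimately have "det E = 0"
      by (metis det_zero_row(1))
    then show False
      using \<open>det E = 1\<close> by simp
  qed
  then have "0 < (\<Prod>i\<in>UNIV. (norm ((E ** A) $ i))\<^sup>2)"
    by (intro prod_pos) simp
  then show ?thesis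
    using det_gram_row_transform[OF \<open>det E = 1\<close>, of A] det_gram_orthogonal_rows[OF orth] by linarith
qed

lemma norm_rows_eq_1_if_abs_det_ge_1:
  fixes A :: "real^'n^'n"
  assumes short: "\<And>i. norm (A $ i) \<le> 1" and "1 \<le> \<bar>det A\<bar>"
  shows "norm (A $ k) = 1"
proof (rule ccontr)
  assume "norm (A $ k) \<noteq> 1"
  then have "norm (A $ k) < 1"
    using short[of k] by simp
  have "(\<Prod>i\<in>UNIV. norm (A $ i)) = norm (A $ k) * (\<Prod>i\<in>UNIV - {k}. norm (A $ i))"
    by (simp add: prod.remove)
  also have "\<dots> \<le> norm (A $ k)"
    using short by (intro mult_left_le prod_le_1) auto
  finally show False
    using abs_det_le_prod_norm_rows[of A] \<open>1 \<le> \<bar>det A\<bar>\<close> \<open>norm (A $ k) < 1\<close> by linarith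
qed

lemma orthonormal_rows_if_abs_det_ge_1:
  fixes A :: "real^'n^'n"
  assumes short: "\<And>i. norm (A $ i) \<le> 1" and det: "1 \<le> \<bar>det A\<bar>"
  shows "A ** transpose A = mat 1"
proof -
  have unit: "norm (A $ i) = 1" for i
    using norm_rows_eq_1_if_abs_det_ge_1[OF assms] .
  have "A $ i \<bullet> A $ j = 0" if "i \<noteq> j" for i j
  proof (rule ccontr)
    define c where "c = A $ i \<bullet> A $ j"
    assume "A $ i \<bullet> A $ j \<noteq> 0"
    then have "c \<noteq> 0"
      by (simp add: c_def)
    define A' where "A' = (\<chi> k. if k = j then row j A + (- c) *s row i A else row k A)"
    have "det A' = det A"
      unfolding A'_def using that by (intro det_row_operation) simp
    have A'_rows: "A' $ k = (if k = j then A $ j - c *\<^sub>R A $ i else A $ k)" for k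
      by (simp add: A'_def row_def vec_lambda_eta scalar_mult_eq_scaleR)
    have "(norm (A' $ j))\<^sup>2 = (A $ j - c *\<^sub>R A $ i) \<bullet> (A $ j - c *\<^sub>R A $ i)"
      by (simp add: A'_rows dot_square_norm)
    also have "\<dots> = A $ j \<bullet> A $ j - 2 * c * (A $ i \<bullet> A $ j) + c\<^sup>2 * (A $ i \<bullet> A $ i)"
      by (simp add: inner_diff_left inner_diff_right inner_commute power2_eq_square algebra_simps)
    also have "\<dots> = 1 - c\<^sup>2"
      using unit[of i] unit[of j] by (simp add: c_def dot_square_norm power2_eq_square)
    finally have "(norm (A' $ j))\<^sup>2 < 1"
      using \<open>c \<noteq> 0\<close> by simp
    then have "norm (A' $ j) \<noteq> 1"
      by auto
    moreover have "norm (A' $ k) \<le> 1" for k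
      using \<open>(norm (A' $ j))\<^sup>2 < 1\<close> unit[of k] by (cases "k = j") (auto simp: A'_rows abs_square_less_1)
    ultimately show False
      using norm_rows_eq_1_if_abs_det_ge_1[of A' j] det \<open>det A' = det A\<close> by simp
  qed
  moreover have "A $ i \<bullet> A $ i = 1" for i
    using unit[of i] by (simp add: dot_square_norm)
  ultimately show ?thesis
    by (simp add: matrix_mul_transpose_eq_inner_rows vec_eq_iff mat_def)
qed

section \<open>The cube, its polar and its maximum volume ellipsoid\<close>

lemma mem_Binf_iff: "x \<in> Binf \<longleftrightarrow> (\<forall>i. \<bar>x $ i\<bar> \<le> 1)"
proof
  assume "x \<in> Binf"
  then show "\<forall>i. \<bar>x $ i\<bar> \<le> 1"
    unfolding Binf_def using component_le_infnorm_cart order_trans by blast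
next
  assume "\<forall>i. \<bar>x $ i\<bar> \<le> 1"
  then have "Sup {\<bar>x $ i\<bar> |i. i \<in> UNIV} \<le> 1"
    by (intro cSup_least) auto
  then show "x \<in> Binf"
    unfolding Binf_def infnorm_cart by simp
qed

lemma convex_Binf: "convex (Binf :: (real^'n) set)"
proof -
  have "(Binf :: (real^'n) set) = cbox (- 1) 1"
    by (auto simp: mem_Binf_iff mem_box_cart abs_le_iff)
  then show ?thesis
    using convex_box(1) by metis
qed

lemma cball_subset_Binf: "cball 0 1 \<subseteq> Binf"
  unfolding Binf_def using infnorm_le_norm order_trans by fastforce

lemma polar_wrt_antimono: "A \<subseteq> B \<Longrightarrow> polar_wrt B d \<subseteq> polar_wrt A d"
  unfolding polar_wrt_def by blast

lemma polar_wrt_cball: "polar_wrt (cball 0 1) 0 = cball (0::real^'n) 1"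
proof
  show "polar_wrt (cball 0 1) 0 \<subseteq> cball (0::real^'n) 1"
  proof
    fix x :: "real^'n"
    assume x: "x \<in> polar_wrt (cball 0 1) 0"
    show "x \<in> cball 0 1"
    proof (cases "x = 0")
      case False
      have "(1 / norm x) *\<^sub>R x \<in> cball 0 1"
        using False by simp
      then have "x \<bullet> ((1 / norm x) *\<^sub>R x - 0) \<le> 1"
        using x unfolding polar_wrt_def by blast
      moreover have "x \<bullet> ((1 / norm x) *\<^sub>R x - 0) = norm x"
        using False by (simp add: dot_square_norm power2_eq_square)
      ultimately show ?thesis
        by simp
    qed simp
  qed
  show "cball 0 1 \<subseteq> polar_wrt (cball 0 1) (0::real^'n)"
    unfolding polar_wrt_def
    by clarsimp (metis norm_cauchy_schwarz mult_le_one norm_ge_zero order_trans)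
qed

lemma sum_abs_le_1_if_mem_polar_Binf:
  assumes "v \<in> polar_wrt Binf 0"
  shows "(\<Sum>k\<in>UNIV. \<bar>v $ k\<bar>) \<le> 1"
proof -
  have "(\<chi> k. sgn (v $ k)) \<in> Binf"
    by (simp add: mem_Binf_iff abs_sgn_eq)
  then have "v \<bullet> (\<chi> k. sgn (v $ k)) \<le> 1"
    using assms unfolding polar_wrt_def by fastforce
  then show ?thesis
    by (simp add: inner_vec_def abs_sgn)
qed

lemma signed_axis_if_norm_1_and_sum_abs_le_1:
  fixes v :: "real^'n"
  assumes "norm v = 1" and l1: "(\<Sum>k\<in>UNIV. \<bar>v $ k\<bar>) \<le> 1"
  shows "\<exists>j s. s \<in> {-1, 1} \<and> v = s *\<^sub>R axis j 1"
proof -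
  have "\<bar>v $ k\<bar> \<le> 1" for k
    using member_le_sum[of k UNIV "\<lambda>k. \<bar>v $ k\<bar>"] l1 by simp
  then have le: "(v $ k)\<^sup>2 \<le> \<bar>v $ k\<bar>" for k
    by (metis abs_ge_zero mult_left_le power2_abs power2_eq_square)
  have "(\<Sum>k\<in>UNIV. (v $ k)\<^sup>2) = 1"
    using \<open>norm v = 1\<close> by (simp add: norm_eq_sqrt_inner inner_vec_def power2_eq_square)
  then have "(\<Sum>k\<in>UNIV. \<bar>v $ k\<bar> - (v $ k)\<^sup>2) \<le> 0"
    using l1 by (simp add: sum_subtractf)
  then have "\<bar>v $ k\<bar> = (v $ k)\<^sup>2" for k
    using sum_nonneg_eq_0_iff[of UNIV "\<lambda>k. \<bar>v $ k\<bar> - (v $ k)\<^sup>2"] le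
    by (simp add: sum_nonneg antisym)
  then have zero_or_unit: "v $ k = 0 \<or> \<bar>v $ k\<bar> = 1" for k
    by (metis abs_mult_self_eq mult_cancel_right1 power2_eq_square abs_0_eq)
  obtain j where "v $ j \<noteq> 0"
    using \<open>norm v = 1\<close> by (metis norm_zero vec_eq_iff zero_index zero_neq_one)
  have "v $ k = 0" if "k \<noteq> j" for k
  proof (rule ccontr)
    assume "v $ k \<noteq> 0"
    have "\<bar>v $ j\<bar> + \<bar>v $ k\<bar> \<le> (\<Sum>k\<in>UNIV. \<bar>v $ k\<bar>)"
      using sum.subset_diff[of "{j, k}" UNIV "\<lambda>k. \<bar>v $ k\<bar>"] that by (simp add: sum_nonneg)
    then show False
      using zero_or_unit[of j] zero_or_unit[of k] \<open>v $ j \<noteq> 0\<close> \<open>v $ k \<noteq> 0\<close> l1 by simp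
  qed
  then have "v = v $ j *\<^sub>R axis j 1"
    by (auto simp: vec_eq_iff axis_def)
  moreover have "v $ j \<in> {-1, 1}"
    using zero_or_unit[of j] \<open>v $ j \<noteq> 0\<close> by auto
  ultimately show ?thesis
    by blast
qed

lemma ellipsoid_eq_image: "ellipsoid C g = (+) g ` (*v) C ` cball 0 1"
  unfolding ellipsoid_def image_image by (force simp: add.commute)

lemma measure_ellipsoid:
  fixes C :: "real^'n^'n"
  shows "measure lebesgue (ellipsoid C g) = \<bar>det C\<bar> * measure lebesgue (cball (0::real^'n) 1)"
  unfolding ellipsoid_eq_image measure_translation
  using measure_linear_image_cart[OF matrix_vector_mul_linear[of C], of "cball 0 1"]
  by (simp add: matrix_of_matrix_vector_mul)

lemma norm_row_le_if_bounded_on_cball: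
  fixes A :: "real^'n^'m"
  assumes "\<And>u. norm u \<le> 1 \<Longrightarrow> \<bar>(A *v u) $ i\<bar> \<le> b"
  shows "norm (A $ i) \<le> b"
proof (cases "A $ i = 0")
  case True
  then show ?thesis
    using assms[of 0] by simp
next
  case False
  have "(A *v ((1 / norm (A $ i)) *\<^sub>R A $ i)) $ i = norm (A $ i)"
    using False by (simp add: matrix_vector_mul_component dot_square_norm power2_eq_square)
  then show ?thesis
    using assms[of "(1 / norm (A $ i)) *\<^sub>R A $ i"] False by simp
qed

lemma norm_row_le_if_ellipsoid_subset_Binf:
  fixes C :: "real^'n^'n"
  assumes "ellipsoid C g \<subseteq> Binf"
  shows "norm (C $ i) \<le> 1 - \<bar>g $ i\<bar>"
proof (rule norm_row_le_if_bounded_on_cball)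
  fix u :: "real^'n"
  assume "norm u \<le> 1"
  moreover have "norm (- u) \<le> 1"
    using \<open>norm u \<le> 1\<close> by simp
  ultimately have "C *v u + g \<in> Binf" "C *v (- u) + g \<in> Binf"
    using assms unfolding ellipsoid_def by blast+
  then have "\<bar>(C *v u) $ i + g $ i\<bar> \<le> 1" "\<bar>- (C *v u) $ i + g $ i\<bar> \<le> 1"
    by (auto simp: mem_Binf_iff vec.neg)
  then show "\<bar>(C *v u) $ i\<bar> \<le> 1 - \<bar>g $ i\<bar>"
    by linarith
qed

lemma abs_det_ge_1_if_MVIE_Binf:
  fixes C :: "real^'n^'n"
  assumes "is_MVIE Binf C g"
  shows "1 \<le> \<bar>det C\<bar>"
proof -
  have "ellipsoid (mat 1) (0::real^'n) = cball 0 1"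
    unfolding ellipsoid_def by auto
  moreover have "psd (mat 1 :: real^'n^'n)"
    unfolding psd_def by (simp add: transpose_mat)
  ultimately have "measure lebesgue (cball (0::real^'n) 1) \<le> measure lebesgue (ellipsoid C g)"
    using assms cball_subset_Binf unfolding is_MVIE_def by metis
  moreover have "0 < measure lebesgue (cball (0::real^'n) 1)"
    using content_cball_pos[of 1 "0::real^'n"] by (simp add: measure_completion)
  ultimately show ?thesis
    by (simp add: measure_ellipsoid)
qed

lemma ellipsoid_eq_cball_if_orthogonal:
  fixes C :: "real^'n^'n"
  assumes "C ** transpose C = mat 1"
  shows "ellipsoid C 0 = cball 0 1"
proof -
  have "orthogonal_matrix C"
    using assms matrix_left_right_inverse unfolding orthogonal_matrix_def by blast
  then have "orthogonal_transformation ((*v) C)"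
    by (simp add: orthogonal_transformation_matrix matrix_of_matrix_vector_mul)
  then show ?thesis
    by (simp add: ellipsoid_eq_image image_orthogonal_transformation_cball)
qed

lemma MVIE_Binf_eq_cball:
  fixes C :: "real^'n^'n"
  assumes "is_MVIE Binf C g"
  shows "g = 0" and "ellipsoid C g = cball 0 1"
proof -
  have "ellipsoid C g \<subseteq> Binf"
    using assms by (simp add: is_MVIE_def)
  then have rows: "norm (C $ i) \<le> 1 - \<bar>g $ i\<bar>" for i
    by (rule norm_row_le_if_ellipsoid_subset_Binf)
  have short: "norm (C $ i) \<le> 1" for i
    using rows[of i] abs_ge_zero[of "g $ i"] by linarith
  note det = abs_det_ge_1_if_MVIE_Binf[OF assms]
  have "norm (C $ i) = 1" for i
    using norm_rows_eq_1_if_abs_det_ge_1[OF short det] .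
  then show "g = 0"
    using rows by (simp add: vec_eq_iff)
  then show "ellipsoid C g = cball 0 1"
    using ellipsoid_eq_cball_if_orthogonal[OF orthonormal_rows_if_abs_det_ge_1[OF short det]] by simp
qed

section \<open>Identifiability of Det-Max\<close>

lemma transpose_signed_diag: "signed_diag D \<Longrightarrow> transpose D = D"
  by (auto simp: signed_diag_def transpose_def vec_eq_iff)

lemma signed_permutation_if_orthonormal_signed_axis_rows:
  fixes W :: "real^'n^'n"
  assumes orth: "W ** transpose W = mat 1"
    and axes: "\<And>i. \<exists>j s. s \<in> {-1, 1} \<and> W $ i = s *\<^sub>R axis j 1"
  obtains Pi D where "permutation_matrix Pi" "signed_diag D" "W = D ** Pi"
proof -
  obtain p d where sign: "\<And>i. d i \<in> {-1, 1}" and row: "\<And>i. W $ i = d i *\<^sub>R axis (p i) 1"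
    using axes by metis
  have "inj p"
  proof (rule injI)
    fix i i'
    assume "p i = p i'"
    then have "W $ i \<bullet> W $ i' \<noteq> 0"
      using sign[of i] sign[of i'] by (auto simp: row inner_axis_axis)
    then show "i = i'"
      using orth by (auto simp: matrix_mul_transpose_eq_inner_rows vec_eq_iff mat_def split: if_splits)
  qed
  then have "p permutes UNIV"
    using finite_UNIV_inj_surj[OF finite] by (intro bij_imp_permutes) (auto simp: bij_betw_def)
  define Pi :: "real^'n^'n" where "Pi = (\<chi> i j. if p i = j then 1 else 0)"
  define D :: "real^'n^'n" where "D = (\<chi> i j. if i = j then d i else 0)"
  have "(D ** Pi) $ i $ j = W $ i $ j" for i j
  proof -
    have "(D ** Pi) $ i $ j = (\<Sum>k\<in>UNIV. (if i = k then d i else 0) * (if p k = j then 1 else 0))"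
      by (simp add: matrix_matrix_mult_def D_def Pi_def)
    also have "\<dots> = d i * (if p i = j then 1 else 0)"
      by (simp add: if_distrib[of "\<lambda>x. x * _"] cong: if_cong)
    finally show ?thesis
      by (auto simp: row axis_def)
  qed
  then have "W = D ** Pi"
    by (simp add: vec_eq_iff)
  moreover have "permutation_matrix Pi"
    using \<open>p permutes UNIV\<close> unfolding permutation_matrix_def Pi_def by blast
  moreover have "signed_diag D"
    using sign unfolding signed_diag_def D_def by blast
  ultimately show ?thesis
    using that by blast
qed

lemma suff_scattered_BinfD:
  fixes S :: "real^'n^'r"
  assumes "suff_scattered S Binf"
  shows "cball 0 1 \<subseteq> convex hull (columns S)"
    and "polar_wrt (convex hull (columns S)) 0 \<inter> sphere 0 1 \<subseteq> polar_wrt Binf 0"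
proof -
  obtain C g where "is_MVIE Binf C g" and inner: "ellipsoid C g \<subseteq> convex hull (columns S)"
    and polar: "polar_wrt (convex hull (columns S)) g \<inter> frontier (polar_wrt (ellipsoid C g) g)
                  = ext_pts (polar_wrt Binf g)"
    using assms unfolding suff_scattered_def by blast
  then have "g = 0" and ball: "ellipsoid C g = cball 0 1"
    using MVIE_Binf_eq_cball by blast+
  show "cball 0 1 \<subseteq> convex hull (columns S)"
    using inner ball by simp
  have "ext_pts (polar_wrt Binf 0) \<subseteq> polar_wrt Binf 0"
    by (auto simp: ext_pts_def extreme_point_of_def)
  moreover have "frontier (polar_wrt (ellipsoid C g) g) = sphere 0 1"
    by (simp add: \<open>g = 0\<close> ball[unfolded \<open>g = 0\<close>] polar_wrt_cball frontier_cball)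
  ultimately show "polar_wrt (convex hull (columns S)) 0 \<inter> sphere 0 1 \<subseteq> polar_wrt Binf 0"
    using polar by (simp add: \<open>g = 0\<close>)
qed

lemma right_invertible_if_cball_subset_convex_hull_columns:
  fixes S :: "real^'n^'r"
  assumes "cball 0 1 \<subseteq> convex hull (columns S)"
  obtains R where "S ** R = mat 1"
proof -
  have "x \<in> span (columns S)" for x :: "real^'r"
  proof (cases "x = 0")
    case False
    have "(1 / norm x) *\<^sub>R x \<in> span (columns S)"
      using assms False convex_hull_subset_span by fastforce
    then have "norm x *\<^sub>R ((1 / norm x) *\<^sub>R x) \<in> span (columns S)"
      by (rule span_mul)
    with False show ?thesis
      by simp
  qed (simp add: span_zero)
  then have "vec.span (columns S) = UNIV"
    by (auto simp: span_vec_eq)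
  then show ?thesis
    using that matrix_right_invertible_span_columns by blast
qed

lemma factors_related_by_right_inverse:
  fixes Hg Hs :: "real^'r^'m" and Sg Ss :: "real^'n^'r"
  assumes "inj ((*v) Hg)" and "Sg ** R = mat 1" and "Hg ** Sg = Hs ** Ss"
  shows "Ss = (Ss ** R) ** Sg" and "Hs ** (Ss ** R) = Hg"
proof -
  obtain L where "L ** Hg = mat 1"
    using assms(1) matrix_left_invertible_injective by blast
  then have "Sg = (L ** Hs) ** Ss"
    by (metis assms(3) matrix_mul_assoc matrix_mul_lid)
  then have "(L ** Hs) ** (Ss ** R) = mat 1"
    by (metis assms(2) matrix_mul_assoc)
  then have "(Ss ** R) ** (L ** Hs) = mat 1"
    by (rule matrix_left_right_inverse1)
  then show Ss: "Ss = (Ss ** R) ** Sg"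
    by (metis \<open>Sg = (L ** Hs) ** Ss\<close> matrix_mul_assoc matrix_mul_lid)
  have "Hs ** (Ss ** R) = (Hs ** Ss) ** R"
    by (simp add: matrix_mul_assoc)
  also have "\<dots> = Hg ** (Sg ** R)"
    by (simp add: assms(3) matrix_mul_assoc)
  also have "\<dots> = Hg"
    by (simp add: assms(2))
  finally show "Hs ** (Ss ** R) = Hg" .
qed

lemma abs_det_ge_1_if_gram_not_smaller:
  fixes W :: "real^'r^'r" and S :: "real^'n^'r"
  assumes "0 < det (S ** transpose S)" and "det (S ** transpose S) \<le> det ((W ** S) ** transpose (W ** S))"
  shows "1 \<le> \<bar>det W\<bar>"
proof -
  have "(W ** S) ** transpose (W ** S) = W ** (S ** transpose S) ** transpose W"
    by (simp add: matrix_transpose_mul matrix_mul_assoc)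
  then have "det ((W ** S) ** transpose (W ** S)) = (det W)\<^sup>2 * det (S ** transpose S)"
    by (simp add: det_mul power2_eq_square)
  then have "1 \<le> (det W)\<^sup>2"
    using assms by simp
  then show ?thesis
    using abs_le_square_iff[of 1 "det W"] by simp
qed

lemma row_mem_polar_if_columns_in_Binf:
  fixes W :: "real^'r^'r" and S :: "real^'n^'r"
  assumes "\<And>j. column j (W ** S) \<in> Binf"
  shows "W $ i \<in> polar_wrt (convex hull (columns S)) 0"
proof -
  have "(*v) W ` columns S \<subseteq> Binf"
    using assms by (auto simp: columns_def column_def matrix_matrix_mult_def matrix_vector_mult_def)
  then have "convex hull ((*v) W ` columns S) \<subseteq> Binf"
    using convex_Binf by (rule hull_minimal)
  then have "W *v y \<in> Binf" if "y \<in> convex hull (columns S)" for y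
    using that by (auto simp: convex_hull_linear_image[OF matrix_vector_mul_linear, symmetric])
  then have "\<bar>W $ i \<bullet> y\<bar> \<le> 1" if "y \<in> convex hull (columns S)" for y
    using that by (simp add: mem_Binf_iff matrix_vector_mul_component)
  then show ?thesis
    by (auto simp: polar_wrt_def abs_le_iff)
qed

lemma signed_permutation_if_columns_in_Binf:
  fixes W :: "real^'r^'r" and S :: "real^'n^'r"
  assumes "suff_scattered S Binf" and det: "1 \<le> \<bar>det W\<bar>"
    and columns: "\<And>j. column j (W ** S) \<in> Binf"
  shows "W ** transpose W = mat 1"
    and "\<exists>Pi D. permutation_matrix Pi \<and> signed_diag D \<and> W = D ** Pi"
proof -
  let ?K = "convex hull (columns S)"
  have polar: "W $ i \<in> polar_wrt ?K 0" for i
    using row_mem_polar_if_columns_in_Binf[OF columns] .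
  have short: "norm (W $ i) \<le> 1" for i
    using polar_wrt_antimono[OF suff_scattered_BinfD(1)[OF assms(1)], of 0] polar[of i]
    by (auto simp: polar_wrt_cball)
  show orth: "W ** transpose W = mat 1"
    using orthonormal_rows_if_abs_det_ge_1[OF short det] .
  have "\<exists>j s. s \<in> {-1, 1} \<and> W $ i = s *\<^sub>R axis j 1" for i
  proof (rule signed_axis_if_norm_1_and_sum_abs_le_1)
    show "norm (W $ i) = 1"
      using norm_rows_eq_1_if_abs_det_ge_1[OF short det] .
    then have "W $ i \<in> polar_wrt Binf 0"
      using suff_scattered_BinfD(2)[OF assms(1)] polar[of i] by auto
    then show "(\<Sum>k\<in>UNIV. \<bar>W $ i $ k\<bar>) \<le> 1"
      by (rule sum_abs_le_1_if_mem_polar_Binf)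
  qed
  then show "\<exists>Pi D. permutation_matrix Pi \<and> signed_diag D \<and> W = D ** Pi"
    using signed_permutation_if_orthonormal_signed_axis_rows[OF orth] by metis
qed

theorem theorem2:
  fixes Hg :: "real^'r^'m" and Sg :: "real^'n^'r"
  assumes "CARD('r) \<le> CARD('m)" and "CARD('r) \<le> CARD('n)"
    and "rank Hg = CARD('r)"
    and "\<forall>j. column j Sg \<in> Binf"
    and "suff_scattered Sg Binf"
    and "detmax_optimal (Hg ** Sg) Hs Ss Binf"
  shows "\<exists>Pi D. permutation_matrix Pi \<and> signed_diag D \<and>
           Hs = Hg ** transpose Pi ** D \<and> Ss = D ** Pi ** Sg"
proof -
  obtain R where SR: "Sg ** R = mat 1"
    using right_invertible_if_cball_subset_convex_hull_columns suff_scattered_BinfD(1)[OF assms(5)] by blast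
  have factorization: "Hg ** Sg = Hs ** Ss" and Ss_in_Binf: "\<And>j. column j Ss \<in> Binf"
    using assms(6) unfolding detmax_optimal_def detmax_feasible_def by auto
  have optimal: "det (Sg ** transpose Sg) \<le> det (Ss ** transpose Ss)"
    using assms(4,6) unfolding detmax_optimal_def detmax_feasible_def by blast
  define W where "W = Ss ** R"
  have Ss: "Ss = W ** Sg" and Hs: "Hs ** W = Hg"
    using factors_related_by_right_inverse[OF _ SR factorization] assms(3)
    by (simp_all add: W_def full_rank_injective)
  have "1 \<le> \<bar>det W\<bar>"
    using abs_det_ge_1_if_gram_not_smaller[OF det_gram_pos_if_right_invertible[OF SR]] optimal Ss by simp
  then have orth: "W ** transpose W = mat 1"
    and "\<exists>Pi D. permutation_matrix Pi \<and> signed_diag D \<and> W = D ** Pi"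
    using signed_permutation_if_columns_in_Binf[OF assms(5)] Ss_in_Binf Ss by metis+
  then obtain Pi D where "permutation_matrix Pi" "signed_diag D" and W: "W = D ** Pi"
    by blast
  have "Hs = Hs ** (W ** transpose W)"
    by (simp add: orth)
  also have "\<dots> = Hg ** transpose Pi ** D"
    by (simp add: Hs[symmetric] matrix_mul_assoc W matrix_transpose_mul transpose_signed_diag \<open>signed_diag D\<close>)
  finally show ?thesis
    using \<open>permutation_matrix Pi\<close> \<open>signed_diag D\<close> Ss W by blast
qed

end
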